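(* Let $k$ be a field of prime characteristic $p$, and let $V_1,V_2,\ldots$ be a sequence of $T$-spaces of $k_0\langle X\rangle$ such that (a) $(V_iV_j)^S=V_{i+j}$ for all $i,j\ge1$, and (b) $V_{2m+1}\subseteq V_{m+1}+V_1$ for all $m\ge1$. Let $I: i_1<i_2<i_3<\cdots$ be any increasing sequence of positive integers. Then there exists a set $J$ of positive integers (indices of the sequence) with $|J|\le i_2-i_1+1$ such that $1,2\in J$ and $\sum_{j\ge1} V_{i_j}=\sum_{j\in J}V_{i_j}$.
   Context: $X=\{x_1,x_2,\ldots\}$ is a countably infinite set and $k_0\langle X\rangle$ denotes the free associative (non-unital) $k$-algebra on $X$. A $T$-space is a $k$-subspace of $k_0\langle X\rangle$ invariant under every algebra endomorphism of $k_0\langle X\rangle$. For a subset $A$, $(A)^S$ denotes the $T$-space generated by $A$. For subsets $A,B$, $AB$ denotes $\{ab: a\in A, b\in B\}$. Sums of $T$-spaces are sums of subspaces. *)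

theory Defs
  imports Main "HOL-Computational_Algebra.Primes"
begin

text \<open>The free non-unital associative algebra k_0<X> on X = {x_0, x_1, ...} (countably
infinite, indexed by nat) is modelled as the set of finitely supported functions from
words (lists of variable indices) to k, vanishing on the empty word (no constant term).\<close>

type_synonym 'k fpoly = "nat list \<Rightarrow> 'k"

definition FA :: "'k::field fpoly set" where
  "FA = {f. finite {w. f w \<noteq> 0} \<and> f [] = 0}"

definition fadd :: "'k::field fpoly \<Rightarrow> 'k fpoly \<Rightarrow> 'k fpoly" where
  "fadd f g = (\<lambda>w. f w + g w)"

definition fscale :: "'k::field \<Rightarrow> 'k fpoly \<Rightarrow> 'k fpoly" where
  "fscale c f = (\<lambda>w. c * f w)"

definition fzero :: "'k::field fpoly" where
  "fzero = (\<lambda>w. 0)"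

definition fmul :: "'k::field fpoly \<Rightarrow> 'k fpoly \<Rightarrow> 'k fpoly" where
  "fmul f g = (\<lambda>w. \<Sum>n\<in>{..length w}. f (take n w) * g (drop n w))"

definition is_subspace :: "'k::field fpoly set \<Rightarrow> bool" where
  "is_subspace S \<longleftrightarrow> S \<subseteq> FA \<and> fzero \<in> S \<and>
     (\<forall>f\<in>S. \<forall>g\<in>S. fadd f g \<in> S) \<and> (\<forall>c. \<forall>f\<in>S. fscale c f \<in> S)"

definition is_alg_endo :: "('k::field fpoly \<Rightarrow> 'k fpoly) \<Rightarrow> bool" where
  "is_alg_endo \<phi> \<longleftrightarrow> (\<forall>f\<in>FA. \<phi> f \<in> FA) \<and>
     (\<forall>f\<in>FA. \<forall>g\<in>FA. \<phi> (fadd f g) = fadd (\<phi> f) (\<phi> g)) \<and>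
     (\<forall>c. \<forall>f\<in>FA. \<phi> (fscale c f) = fscale c (\<phi> f)) \<and>
     (\<forall>f\<in>FA. \<forall>g\<in>FA. \<phi> (fmul f g) = fmul (\<phi> f) (\<phi> g))"

definition is_Tspace :: "'k::field fpoly set \<Rightarrow> bool" where
  "is_Tspace S \<longleftrightarrow> is_subspace S \<and> (\<forall>\<phi>. is_alg_endo \<phi> \<longrightarrow> (\<forall>f\<in>S. \<phi> f \<in> S))"

definition Tgen :: "'k::field fpoly set \<Rightarrow> 'k fpoly set" where
  "Tgen A = \<Inter>{S. is_Tspace S \<and> A \<subseteq> S}"

definition setmul :: "'k::field fpoly set \<Rightarrow> 'k fpoly set \<Rightarrow> 'k fpoly set" where
  "setmul A B = {fmul a b | a b. a \<in> A \<and> b \<in> B}"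

definition ssum2 :: "'k::field fpoly set \<Rightarrow> 'k fpoly set \<Rightarrow> 'k fpoly set" where
  "ssum2 A B = {fadd a b | a b. a \<in> A \<and> b \<in> B}"

definition ssum :: "'i set \<Rightarrow> ('i \<Rightarrow> 'k::field fpoly set) \<Rightarrow> 'k fpoly set" where
  "ssum I V = \<Inter>{S. is_subspace S \<and> (\<Union>j\<in>I. V j) \<subseteq> S}"

end

theory Submission
  imports Defs
begin

text \<open>Put \<open>d = i 2 - i 1\<close> and let \<open>W\<close> be the sum of the \<open>V (i j)\<close> over \<open>j = 2\<close> and the
  first index \<open>j\<close> of each residue class of \<open>i j\<close> modulo \<open>d\<close>; there are at most \<open>d\<close> such classes.
  Multiplying hypothesis (b) repeatedly by \<open>V 1\<close> gives \<open>V (2v - u) \<subseteq> V v + V u\<close> for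
  \<open>1 \<le> u < v\<close>, so the indices \<open>n\<close> with \<open>V n \<subseteq> W\<close> form a set closed under the reflection
  \<open>(u, v) \<mapsto> 2v - u\<close>. A reflection closed set containing \<open>x\<close>, \<open>x + g\<close> and \<open>x + d\<close> contains every
  \<open>x + \<alpha>g + \<beta>d\<close> (Euclidean descent on \<open>g + d\<close>). Starting from \<open>i 1\<close>, \<open>i 2 = i 1 + d\<close> and the
  first member of a residue class, this reaches every later member of that class.\<close>

definition reflection_closed :: "(nat \<Rightarrow> bool) \<Rightarrow> bool" where
  "reflection_closed P \<longleftrightarrow> (\<forall>u v. P u \<longrightarrow> P v \<longrightarrow> u < v \<longrightarrow> P (2 * v - u))"

lemma reflection_closedD:
  "reflection_closed P \<Longrightarrow> P u \<Longrightarrow> P v \<Longrightarrow> u < v \<Longrightarrow> P (2 * v - u)"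
  unfolding reflection_closed_def by blast

lemma reflection_closed_progression:
  assumes P: "reflection_closed P" and "P u" "P (u + e)"
  shows "P (u + k * e)"
proof (cases "e = 0")
  case True
  then show ?thesis using \<open>P u\<close> by simp
next
  case False
  have "P (u + k * e) \<and> P (u + Suc k * e)"
  proof (induction k)
    case 0
    then show ?case using assms by simp
  next
    case (Suc k)
    have "u + k * e < u + Suc k * e" using False by simp
    then have "P (2 * (u + Suc k * e) - (u + k * e))"
      using reflection_closedD[OF P] Suc by blast
    moreover have "2 * (u + Suc k * e) - (u + k * e) = u + Suc (Suc k) * e"
      by (simp add: algebra_simps)
    ultimately show ?case using Suc by metis
  qed
  then show ?thesis by blast
qed

lemma reflection_closed_two_steps:
  assumes P: "reflection_closed P" and "P x" "P (x + g)" "P (x + d)"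
  shows "P (x + \<alpha> * g + \<beta> * d)"
  using assms(2-)
proof (induction "g + d" arbitrary: x g d \<alpha> \<beta> rule: less_induct)
  case less
  have ordered: "P (x + a * s + b * l)"
    if "s \<le> l" "P (x + s)" "P (x + l)" "s + l = g + d" for s l a b
  proof (cases "s = 0 \<or> s = l \<or> a + b = 0")
    case True
    then have "x + a * s + b * l = x + (if s = 0 then b else a + b) * l"
      by (auto simp: algebra_simps)
    then show ?thesis
      by (metis reflection_closed_progression[OF P less.prems(1) \<open>P (x + l)\<close>])
  next
    case False
    \<comment> \<open>Rebase at \<open>x + s\<close> with steps \<open>s\<close> and \<open>l - s\<close>.\<close>
    have "P (x + s + s)"
      using reflection_closed_progression[OF P less.prems(1) \<open>P (x + s)\<close>, of 2]
      by (simp add: mult_2 add.assoc)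
    moreover have "P (x + s + (l - s))" using \<open>P (x + l)\<close> \<open>s \<le> l\<close> by simp
    ultimately have "P (x + s + (a + b - 1) * s + b * (l - s))"
      using less.hyps[of s "l - s" "x + s"] \<open>P (x + s)\<close> \<open>s \<le> l\<close> False that(4) by auto
    moreover have "x + s + (a + b - 1) * s + b * (l - s) = x + a * s + b * l"
    proof -
      have "s + (a + b - 1) * s = (a + b) * s" using False by (cases "a + b") auto
      moreover have "b * (l - s) + b * s = b * l"
        using \<open>s \<le> l\<close> by (metis add_mult_distrib2 le_add_diff_inverse2)
      ultimately show ?thesis by (simp add: algebra_simps)
    qed
    ultimately show ?thesis by metis
  qed
  show ?case
  proof (cases "g \<le> d")
    case True
    then show ?thesis using ordered less.prems by blast
  next
    case False
    then show ?thesis using ordered[of d g \<beta> \<alpha>] less.prems by (simp add: add_ac)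
  qed
qed

lemma reflection_closed_residue_class:
  assumes P: "reflection_closed P" and "P a" "P (a + d)" "P r"
    and "a \<le> r" "r \<le> n" "n mod d = r mod d"
  shows "P n"
proof -
  obtain k where n: "n = r + k * d"
    using \<open>r \<le> n\<close> \<open>n mod d = r mod d\<close>
    by (metis dvd_def le_add_diff_inverse mod_eq_dvd_iff_nat mult.commute)
  define q where "q = (r - a) div d"
  define x where "x = a + q * d"
  define g where "g = (r - a) mod d"
  have r: "r = x + g"
    unfolding x_def q_def g_def using \<open>a \<le> r\<close> by (simp add: mod_div_mult_eq)
  have "P x" unfolding x_def
    using reflection_closed_progression[OF P \<open>P a\<close> \<open>P (a + d)\<close>] .
  moreover have "P (x + g)" using r \<open>P r\<close> by simp
  moreover have "P (x + d)"
    using reflection_closed_progression[OF P \<open>P a\<close> \<open>P (a + d)\<close>, of "Suc q"]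
    by (simp add: x_def algebra_simps)
  ultimately have "P (x + 1 * g + k * d)"
    by (rule reflection_closed_two_steps[OF P])
  then show ?thesis using n r by simp
qed

lemma seq_le_of_Suc_less_from:
  fixes f :: "nat \<Rightarrow> 'a::preorder"
  assumes "\<forall>j\<ge>m. f j < f (Suc j)" and "m \<le> j" and "j \<le> j'"
  shows "f j \<le> f j'"
  using \<open>j \<le> j'\<close>
proof (induction rule: dec_induct)
  case (step n)
  then have "f n < f (Suc n)" using assms(1,2) by simp
  then show ?case using step.IH by (meson le_less_trans less_imp_le)
qed simp

lemma residue_class_representatives:
  fixes f :: "nat \<Rightarrow> nat"
  assumes "d > 0"
  obtains F where "F \<subseteq> {1..}" "finite F" "card F \<le> d" "1 \<in> F"
    "\<And>j. j \<ge> 1 \<Longrightarrow> \<exists>j0\<in>F. j0 \<le> j \<and> f j0 mod d = f j mod d"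
proof
  define residues where "residues = (\<lambda>j. f j mod d) ` {1..}"
  define first where "first \<rho> = (LEAST j. j \<ge> 1 \<and> f j mod d = \<rho>)" for \<rho>
  have first: "first (f j mod d) \<ge> 1 \<and> f (first (f j mod d)) mod d = f j mod d
      \<and> first (f j mod d) \<le> j" if "j \<ge> 1" for j
    unfolding first_def using that by (metis (mono_tags, lifting) LeastI Least_le)
  have residues: "residues \<subseteq> {..<d}"
    unfolding residues_def using \<open>d > 0\<close> by auto
  show "first ` residues \<subseteq> {1..}" using first unfolding residues_def by auto
  show "finite (first ` residues)" using finite_subset[OF residues] by simp
  have "card (first ` residues) \<le> card residues"
    using card_image_le finite_subset[OF residues] by blast
  also have "\<dots> \<le> d" using card_mono[OF _ residues] by simp
  finally show "card (first ` residues) \<le> d" .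
  have "first (f 1 mod d) = 1" using first[of 1] by simp
  then show "1 \<in> first ` residues" unfolding residues_def by force
  show "\<exists>j0\<in>first ` residues. j0 \<le> j \<and> f j0 mod d = f j mod d" if "j \<ge> 1" for j
    using first[OF that] that unfolding residues_def by blast
qed

lemma reflection_closed_sequence_generators:
  fixes i :: "nat \<Rightarrow> nat"
  assumes mono: "\<forall>j\<ge>1. i j < i (Suc j)"
  obtains J where "J \<subseteq> {1..}" "finite J" "card J \<le> i 2 - i 1 + 1" "1 \<in> J" "2 \<in> J"
    "\<And>P j. reflection_closed P \<Longrightarrow> \<forall>j\<in>J. P (i j) \<Longrightarrow> j \<ge> 1 \<Longrightarrow> P (i j)"
proof -
  define d where "d = i 2 - i 1"
  have i_le: "i j \<le> i j'" if "1 \<le> j" "j \<le> j'" for j j'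
    using seq_le_of_Suc_less_from[OF mono that] .
  have "i 1 < i 2" using mono by (simp add: numeral_2_eq_2)
  then have "d > 0" and i2: "i 2 = i 1 + d" by (auto simp: d_def)
  obtain F where F: "F \<subseteq> {1..}" "finite F" "card F \<le> d" "1 \<in> F"
    and rep: "\<And>j. j \<ge> 1 \<Longrightarrow> \<exists>j0\<in>F. j0 \<le> j \<and> i j0 mod d = i j mod d"
    using residue_class_representatives[OF \<open>d > 0\<close>] by metis
  show thesis
  proof
    show "insert 2 F \<subseteq> {1..}" "finite (insert 2 F)" "1 \<in> insert 2 F" "2 \<in> insert 2 F"
      using F by auto
    show "card (insert 2 F) \<le> i 2 - i 1 + 1"
      using F by (auto simp: d_def card_insert_if)
    fix P and j :: nat assume closed: "reflection_closed P" and PJ: "\<forall>j\<in>insert 2 F. P (i j)"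
      and "j \<ge> 1"
    obtain j0 where "j0 \<in> F" "j0 \<le> j" "i j0 mod d = i j mod d"
      using rep[OF \<open>j \<ge> 1\<close>] by blast
    then show "P (i j)"
      using reflection_closed_residue_class[OF closed, of "i 1" d "i j0" "i j"]
        PJ i2 i_le F(1,4) \<open>j \<ge> 1\<close> by auto
  qed
qed

lemma fmul_fadd_left: "fmul (fadd f g) h = fadd (fmul f h) (fmul g h)"
  unfolding fmul_def fadd_def by (simp add: distrib_right sum.distrib)

lemma FA_fadd: "f \<in> FA \<Longrightarrow> g \<in> FA \<Longrightarrow> fadd f g \<in> FA"
proof -
  have "{w. f w + g w \<noteq> 0} \<subseteq> {w. f w \<noteq> 0} \<union> {w. g w \<noteq> 0}" by auto
  then show "f \<in> FA \<Longrightarrow> g \<in> FA \<Longrightarrow> fadd f g \<in> FA"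
    unfolding FA_def fadd_def by (auto intro: finite_subset)
qed

lemma FA_fscale: "f \<in> FA \<Longrightarrow> fscale c f \<in> FA"
proof -
  have "{w. c * f w \<noteq> 0} \<subseteq> {w. f w \<noteq> 0}" by auto
  then show "f \<in> FA \<Longrightarrow> fscale c f \<in> FA"
    unfolding FA_def fscale_def by (auto intro: finite_subset)
qed

lemma is_subspace_FA: "is_subspace FA"
  unfolding is_subspace_def using FA_fadd FA_fscale by (auto simp: FA_def fzero_def)

lemma is_subspace_ssum:
  assumes "\<forall>j\<in>I. V j \<subseteq> FA"
  shows "is_subspace (ssum I V)"
proof -
  have "ssum I V \<subseteq> FA" unfolding ssum_def using assms is_subspace_FA by blast
  then show ?thesis unfolding ssum_def is_subspace_def by blast
qed

lemma ssum_upper: "j \<in> I \<Longrightarrow> V j \<subseteq> ssum I V"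
  unfolding ssum_def by blast

lemma ssum_least: "is_subspace S \<Longrightarrow> \<forall>j\<in>I. V j \<subseteq> S \<Longrightarrow> ssum I V \<subseteq> S"
  unfolding ssum_def by blast

lemma ssum_mono: "I \<subseteq> I' \<Longrightarrow> ssum I V \<subseteq> ssum I' V"
  unfolding ssum_def by blast

lemma ssum2_subset:
  assumes "is_subspace S" "A \<subseteq> S" "B \<subseteq> S"
  shows "ssum2 A B \<subseteq> S"
  using assms unfolding is_subspace_def ssum2_def by blast

lemma is_Tspace_ssum2:
  assumes A: "is_Tspace A" and B: "is_Tspace B"
  shows "is_Tspace (ssum2 A B)"
proof -
  have FA: "A \<subseteq> FA" "B \<subseteq> FA"
    using A B unfolding is_Tspace_def is_subspace_def by auto
  have "fadd fzero fzero \<in> ssum2 A B"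
    using A B unfolding is_Tspace_def is_subspace_def ssum2_def by blast
  then have zero: "fzero \<in> ssum2 A B" by (simp add: fadd_def fzero_def)
  have add: "fadd f g \<in> ssum2 A B" if fg: "f \<in> ssum2 A B" "g \<in> ssum2 A B" for f g
  proof -
    obtain a b a' b' where "f = fadd a b" "g = fadd a' b'" "a \<in> A" "a' \<in> A" "b \<in> B" "b' \<in> B"
      using fg unfolding ssum2_def by blast
    moreover have "fadd (fadd a b) (fadd a' b') = fadd (fadd a a') (fadd b b')"
      unfolding fadd_def by (simp add: algebra_simps)
    ultimately show ?thesis
      using A B unfolding is_Tspace_def is_subspace_def ssum2_def by blast
  qed
  have scale: "fscale c f \<in> ssum2 A B" if f: "f \<in> ssum2 A B" for c f
  proof -
    obtain a b where "f = fadd a b" "a \<in> A" "b \<in> B"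
      using f unfolding ssum2_def by blast
    moreover have "fscale c (fadd a b) = fadd (fscale c a) (fscale c b)"
      unfolding fadd_def fscale_def by (simp add: algebra_simps)
    ultimately show ?thesis
      using A B unfolding is_Tspace_def is_subspace_def ssum2_def by blast
  qed
  have endo: "\<phi> f \<in> ssum2 A B" if \<phi>: "is_alg_endo \<phi>" and f: "f \<in> ssum2 A B" for \<phi> f
  proof -
    obtain a b where "f = fadd a b" "a \<in> A" "b \<in> B"
      using f unfolding ssum2_def by blast
    moreover from this have "\<phi> f = fadd (\<phi> a) (\<phi> b)"
      using \<phi> FA unfolding is_alg_endo_def by blast
    ultimately show ?thesis
      using \<phi> A B unfolding is_Tspace_def ssum2_def by blast
  qed
  have "ssum2 A B \<subseteq> FA" using FA FA_fadd unfolding ssum2_def by blast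
  with zero add scale endo show ?thesis unfolding is_Tspace_def is_subspace_def by blast
qed

lemma Tgen_least: "is_Tspace U \<Longrightarrow> A \<subseteq> U \<Longrightarrow> Tgen A \<subseteq> U"
  unfolding Tgen_def by blast

lemma Tgen_upper: "A \<subseteq> Tgen A"
  unfolding Tgen_def by blast

lemma Tspace_seq_shift:
  fixes V :: "nat \<Rightarrow> 'k::field fpoly set"
  assumes T: "\<forall>n\<ge>1. is_Tspace (V n)"
    and M: "\<forall>a\<ge>1. \<forall>b\<ge>1. Tgen (setmul (V a) (V b)) = V (a + b)"
    and "n \<ge> 1" "a \<ge> 1" "b \<ge> 1" and sub: "V n \<subseteq> ssum2 (V a) (V b)"
  shows "V (n + 1) \<subseteq> ssum2 (V (a + 1)) (V (b + 1))"
proof -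
  have mul: "fmul f h \<in> V (c + 1)" if "c \<ge> 1" "f \<in> V c" "h \<in> V 1" for c f h
  proof -
    have "fmul f h \<in> setmul (V c) (V 1)"
      using that(2,3) unfolding setmul_def by blast
    then have "fmul f h \<in> Tgen (setmul (V c) (V 1))"
      using Tgen_upper by blast
    then show ?thesis using M \<open>c \<ge> 1\<close> by simp
  qed
  have "setmul (V n) (V 1) \<subseteq> ssum2 (V (a + 1)) (V (b + 1))"
  proof
    fix y assume "y \<in> setmul (V n) (V 1)"
    then obtain f h where y: "y = fmul f h" and "f \<in> V n" "h \<in> V 1"
      unfolding setmul_def by blast
    moreover obtain g g' where f: "f = fadd g g'" and "g \<in> V a" "g' \<in> V b"
      using sub \<open>f \<in> V n\<close> unfolding ssum2_def by blast
    ultimately have "fmul g h \<in> V (a + 1)" "fmul g' h \<in> V (b + 1)"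
      using mul \<open>a \<ge> 1\<close> \<open>b \<ge> 1\<close> by blast+
    moreover have "y = fadd (fmul g h) (fmul g' h)" using y f fmul_fadd_left by simp
    ultimately show "y \<in> ssum2 (V (a + 1)) (V (b + 1))" unfolding ssum2_def by blast
  qed
  moreover have "is_Tspace (ssum2 (V (a + 1)) (V (b + 1)))"
    using T by (simp add: is_Tspace_ssum2)
  ultimately have "Tgen (setmul (V n) (V 1)) \<subseteq> ssum2 (V (a + 1)) (V (b + 1))"
    by (simp add: Tgen_least)
  then show ?thesis using M \<open>n \<ge> 1\<close> by simp
qed

lemma Tspace_seq_reflect:
  fixes V :: "nat \<Rightarrow> 'k::field fpoly set"
  assumes T: "\<forall>n\<ge>1. is_Tspace (V n)"
    and M: "\<forall>a\<ge>1. \<forall>b\<ge>1. Tgen (setmul (V a) (V b)) = V (a + b)"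
    and B: "\<forall>m\<ge>1. V (2 * m + 1) \<subseteq> ssum2 (V (m + 1)) (V 1)"
    and "1 \<le> u" "u < v"
  shows "V (2 * v - u) \<subseteq> ssum2 (V v) (V u)"
proof -
  define m where "m = v - u"
  have m: "m \<ge> 1" using \<open>u < v\<close> by (simp add: m_def)
  have "V (2 * m + 1 + c) \<subseteq> ssum2 (V (m + 1 + c)) (V (1 + c))" for c
  proof (induction c)
    case 0
    then show ?case using B m by simp
  next
    case (Suc c)
    then show ?case using Tspace_seq_shift[OF T M] by simp
  qed
  moreover have "2 * m + 1 + (u - 1) = 2 * v - u" "m + 1 + (u - 1) = v" "1 + (u - 1) = u"
    using \<open>1 \<le> u\<close> \<open>u < v\<close> by (auto simp: m_def)
  ultimately show ?thesis by metis
qed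

lemma Tspace_seq_reflection_closed:
  fixes V :: "nat \<Rightarrow> 'k::field fpoly set"
  assumes "\<forall>n\<ge>1. is_Tspace (V n)"
    and "\<forall>a\<ge>1. \<forall>b\<ge>1. Tgen (setmul (V a) (V b)) = V (a + b)"
    and "\<forall>m\<ge>1. V (2 * m + 1) \<subseteq> ssum2 (V (m + 1)) (V 1)"
    and W: "is_subspace W"
  shows "reflection_closed (\<lambda>n. n \<ge> 1 \<and> V n \<subseteq> W)"
  unfolding reflection_closed_def
proof (intro allI impI)
  fix u v assume u: "1 \<le> u \<and> V u \<subseteq> W" and v: "1 \<le> v \<and> V v \<subseteq> W" and "u < v"
  then have "V (2 * v - u) \<subseteq> W"
    using Tspace_seq_reflect[OF assms(1-3)] ssum2_subset[OF W] by blast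
  then show "1 \<le> 2 * v - u \<and> V (2 * v - u) \<subseteq> W" using \<open>u < v\<close> by simp
qed

theorem proposition2p1:
  fixes V :: "nat \<Rightarrow> 'k::field fpoly set" and i :: "nat \<Rightarrow> nat" and p :: nat
  assumes "prime p" and "CHAR('k) = p"
    and "\<forall>n\<ge>1. is_Tspace (V n)"
    and "\<forall>a\<ge>1. \<forall>b\<ge>1. Tgen (setmul (V a) (V b)) = V (a + b)"
    and "\<forall>m\<ge>1. V (2 * m + 1) \<subseteq> ssum2 (V (m + 1)) (V 1)"
    and "i 1 \<ge> 1" and "\<forall>j\<ge>1. i j < i (Suc j)"
  shows "\<exists>J. J \<subseteq> {1..} \<and> finite J \<and> card J \<le> i 2 - i 1 + 1 \<and> 1 \<in> J \<and> 2 \<in> J \<and>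
           ssum {j. j \<ge> 1} (\<lambda>j. V (i j)) = ssum J (\<lambda>j. V (i j))"
proof -
  obtain J where J: "J \<subseteq> {1..}" "finite J" "card J \<le> i 2 - i 1 + 1" "1 \<in> J" "2 \<in> J"
    and generators: "\<And>P j. reflection_closed P \<Longrightarrow> \<forall>j\<in>J. P (i j) \<Longrightarrow> j \<ge> 1 \<Longrightarrow> P (i j)"
    using reflection_closed_sequence_generators[OF assms(7)] by metis
  have i_pos: "i j \<ge> 1" if "j \<ge> 1" for j
    using seq_le_of_Suc_less_from[OF assms(7) order_refl that] assms(6) by simp
  define W where "W = ssum J (\<lambda>j. V (i j))"
  have "is_Tspace (V (i j))" if "j \<in> J" for j
    using assms(3) i_pos J(1) that by auto
  then have "\<forall>j\<in>J. V (i j) \<subseteq> FA"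
    unfolding is_Tspace_def is_subspace_def by blast
  then have W: "is_subspace W" unfolding W_def by (rule is_subspace_ssum)
  have "\<forall>j\<in>J. i j \<ge> 1 \<and> V (i j) \<subseteq> W"
    using i_pos ssum_upper[of _ J "\<lambda>j. V (i j)"] J(1) unfolding W_def by auto
  then have "i j \<ge> 1 \<and> V (i j) \<subseteq> W" if "j \<ge> 1" for j
    using generators[OF Tspace_seq_reflection_closed[OF assms(3-5) W]] that by blast
  then have "ssum {j. j \<ge> 1} (\<lambda>j. V (i j)) \<subseteq> W"
    by (intro ssum_least[OF W]) blast
  moreover have "W \<subseteq> ssum {j. j \<ge> 1} (\<lambda>j. V (i j))"
    unfolding W_def using J(1) by (intro ssum_mono) auto
  ultimately show ?thesis using J unfolding W_def by (intro exI[of _ J]) simp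
qed

end
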